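(* Let $f=a_0+a_1x+\cdots+a_nx^n\in\mathbb{Z}[x]$ be a primitive polynomial. Suppose that $a_0=\pm p^k d$ and $\gcd(a_0,a_1)=p^k$ for some positive integers $k$ and $d$ and a prime number $p$, where $p\nmid a_2 d$ and $k$ is odd, and that every zero $\theta\in\mathbb{C}$ of $f$ satisfies $|\theta|>d$. Then $f$ is irreducible in $\mathbb{Z}[x]$.
   Context: A polynomial $a_0+a_1x+\cdots+a_nx^n\in\mathbb{Z}[x]$ is primitive if $\gcd(a_0,a_1,\ldots,a_n)=1$. Coefficients $a_i$ with $i>n$ are taken to be $0$. *)

theory Defs
  imports "HOL-Analysis.Analysis" "HOL-Computational_Algebra.Computational_Algebra"
begin

end

theory Submission
  imports Defs
begin

(* Suppose f = g h with g, h nonconstant, and write b_i, c_i for the coefficients of g, h.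
   If p divided both b_0 and c_0, then p would not divide b_1 c_1 because p does not divide a_2;
   as v_p(b_0) + v_p(c_0) = k is odd, the smaller valuation, say v_p(b_0), would be
   v_p(b_0 c_1 + b_1 c_0) = v_p(a_1) < k, contradicting p^k | a_1.  Hence p does not divide,
   say, b_0, so b_0 divides d.  But |b_0| is at least the product of the moduli of the roots
   of g, all of which exceed d, so |b_0| > d. *)

lemma map_poly_of_int_mult:
  "map_poly (of_int :: int \<Rightarrow> 'a :: comm_ring_1) (p * q) =
     map_poly of_int p * map_poly of_int q"
  by (rule poly_eqI) (simp add: coeff_mult coeff_map_poly)

lemma coeff_mult_1:
  fixes g h :: "'a :: comm_semiring_0 poly"
  shows "coeff (g * h) 1 = coeff g 0 * coeff h 1 + coeff g 1 * coeff h 0"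
  by (simp add: coeff_mult atMost_Suc add_ac)

lemma coeff_mult_2:
  fixes g h :: "'a :: comm_semiring_0 poly"
  shows "coeff (g * h) 2 = coeff g 0 * coeff h 2 + coeff g 1 * coeff h 1 + coeff g 2 * coeff h 0"
  by (simp add: coeff_mult atMost_Suc numeral_2_eq_2 add_ac)

lemma abs_coeff_0_gt_if_roots_norm_gt:
  fixes g :: "int poly" and d :: int
  assumes "degree g > 0" and "d > 0"
    and roots: "\<And>z. poly (map_poly of_int g) z = 0 \<Longrightarrow> cmod z > of_int d"
  shows "\<bar>coeff g 0\<bar> > d"
proof -
  define G where "G = (map_poly of_int g :: complex poly)"
  define n where "n = degree g"
  have "n > 0" using assms(1) by (simp add: n_def)
  have "degree G = n" by (simp add: G_def n_def degree_map_poly)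
  then obtain r where decomp: "smult (lead_coeff G) (\<Prod>i<n. [:-r i, 1:]) = G"
    using complex_poly_decompose' by metis
  have root_gt: "cmod (r i) > of_int d" if "i < n" for i
  proof -
    have "poly G (r i) = lead_coeff G * (\<Prod>j<n. poly [:-r j, 1:] (r i))"
      by (subst decomp[symmetric]) (simp add: poly_prod)
    also have "\<dots> = 0" using that by (intro mult_eq_0_iff[THEN iffD2] disjI2 prod_zero) auto
    finally show ?thesis using roots by (simp add: G_def)
  qed
  have "coeff G 0 = lead_coeff G * (\<Prod>i<n. - r i)"
    by (subst decomp[symmetric]) (simp add: poly_0_coeff_0[symmetric] poly_prod)
  then have "cmod (coeff G 0) = cmod (lead_coeff G) * (\<Prod>i<n. cmod (r i))"
    by (simp add: norm_mult prod_norm[symmetric])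
  then have abs_coeff_0:
      "of_int \<bar>coeff g 0\<bar> = of_int \<bar>lead_coeff g\<bar> * (\<Prod>i<n. cmod (r i))"
    using \<open>degree G = n\<close> by (simp add: G_def n_def coeff_map_poly)
  have "lead_coeff g \<noteq> 0" using assms(1) by auto
  then have lead_coeff_ge_1: "of_int \<bar>lead_coeff g\<bar> \<ge> (1 :: real)" by linarith
  have "(of_int d :: real) \<le> of_int d ^ n"
    using \<open>n > 0\<close> \<open>d > 0\<close> by (simp add: self_le_power)
  also have "\<dots> = (\<Prod>i<n. of_int d)" by simp
  also have "\<dots> < (\<Prod>i<n. cmod (r i))"
    using \<open>n > 0\<close> \<open>d > 0\<close> root_gt
    by (intro prod_mono_strict[of 0]) (force intro: less_imp_le)+
  also have "\<dots> \<le> of_int \<bar>lead_coeff g\<bar> * (\<Prod>i<n. cmod (r i))"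
    using mult_right_mono[OF lead_coeff_ge_1, of "\<Prod>i<n. cmod (r i)"]
    by (simp add: prod_nonneg)
  finally show ?thesis using abs_coeff_0 by simp
qed

lemma not_prime_power_dvd_add_if_multiplicity_less:
  fixes p x y u v :: "'a :: factorial_semiring"
  assumes "prime p" and "x \<noteq> 0" and "\<not> p dvd u"
    and "multiplicity p x < multiplicity p y" and "multiplicity p x < k"
  shows "\<not> p ^ k dvd x * u + v * y"
proof
  define s where "s = multiplicity p x"
  assume "p ^ k dvd x * u + v * y"
  moreover have "p ^ Suc s dvd p ^ k"
    using assms(5) by (intro le_imp_power_dvd) (simp add: s_def)
  ultimately have "p ^ Suc s dvd x * u + v * y" by (rule dvd_trans[rotated])
  moreover have "p ^ Suc s dvd v * y"
    using assms(4) by (intro dvd_mult multiplicity_dvd') (simp add: s_def)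
  ultimately have "p ^ Suc s dvd x * u" by (simp add: dvd_add_left_iff)
  moreover have "multiplicity p (x * u) = s"
  proof -
    have "u \<noteq> 0" using assms(3) by auto
    then show ?thesis
      using assms(1-3)
      by (simp add: s_def prime_elem_multiplicity_mult_distrib not_dvd_imp_multiplicity_0)
  qed
  ultimately show False
    using multiplicity_geI[where n = "Suc s" and p = p and x = "x * u"] assms(1-3)
    by (auto dest: not_prime_unit)
qed

lemma prime_not_dvd_coeff_0_of_factor:
  fixes g h :: "'a :: {factorial_semiring, comm_ring_1} poly"
  assumes "prime p" and "odd k"
    and "coeff (g * h) 0 \<noteq> 0" and "multiplicity p (coeff (g * h) 0) = k"
    and "p ^ k dvd coeff (g * h) 1" and "\<not> p dvd coeff (g * h) 2"
  shows "\<not> p dvd coeff g 0 \<or> \<not> p dvd coeff h 0"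
proof (rule ccontr)
  assume "\<not> ?thesis"
  then have "p dvd coeff g 0 * coeff h 2 + coeff g 2 * coeff h 0" by simp
  then have "\<not> p dvd coeff g 1 * coeff h 1"
    using assms(6) by (auto simp: coeff_mult_2 add_ac dvd_add_right_iff)
  then have g1: "\<not> p dvd coeff g 1" and h1: "\<not> p dvd coeff h 1" by auto
  have g0: "coeff g 0 \<noteq> 0" and h0: "coeff h 0 \<noteq> 0"
    using assms(3) by (auto simp: coeff_mult_0)
  then have sum: "multiplicity p (coeff g 0) + multiplicity p (coeff h 0) = k"
    using assms(1,4) by (simp add: coeff_mult_0 prime_elem_multiplicity_mult_distrib)
  have coeff_1: "p ^ k dvd coeff g 0 * coeff h 1 + coeff g 1 * coeff h 0"
    using assms(5) by (simp only: coeff_mult_1)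
  from sum \<open>odd k\<close> consider
      "multiplicity p (coeff g 0) < multiplicity p (coeff h 0)"
    | "multiplicity p (coeff h 0) < multiplicity p (coeff g 0)"
    by (metis add_self_div_2 linorder_neqE_nat odd_add)
  then show False
  proof cases
    case 1
    then show False
      using not_prime_power_dvd_add_if_multiplicity_less[OF assms(1) g0 h1 1, of k "coeff g 1"]
        sum coeff_1 by simp
  next
    case 2
    then show False
      using not_prime_power_dvd_add_if_multiplicity_less[OF assms(1) h0 g1 2, of k "coeff h 1"]
        sum coeff_1 by (simp add: add_ac mult_ac)
  qed
qed

lemma is_unit_if_degree_0_dvd_primitive:
  fixes f g :: "'a :: {semiring_gcd, idom_divide} poly"
  assumes "content f = 1" and "g dvd f" and "degree g = 0"
  shows "is_unit g"
  using assms by (metis const_poly_dvd_iff_dvd_content degree_0_id is_unit_const_poly_iff)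

lemma degree_eq_0_if_coeff_0_dvd:
  fixes f g :: "int poly" and d :: int
  assumes "g dvd f" and "d > 0" and "coeff g 0 dvd d"
    and roots: "\<And>z. poly (map_poly of_int f) z = 0 \<Longrightarrow> cmod z > of_int d"
  shows "degree g = 0"
proof (rule ccontr)
  assume "degree g \<noteq> 0"
  obtain h where "f = g * h" using assms(1) by blast
  then have "\<bar>coeff g 0\<bar> > d"
    using \<open>degree g \<noteq> 0\<close> \<open>d > 0\<close> roots
    by (intro abs_coeff_0_gt_if_roots_norm_gt) (simp_all add: map_poly_of_int_mult)
  moreover have "\<bar>coeff g 0\<bar> \<le> d"
    using assms(2,3) dvd_imp_le_int[of d "coeff g 0"] by simp
  ultimately show False by simp
qed

theorem theorem23:
  fixes f :: "int poly" and p :: int and k :: nat and d :: int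
  assumes primitive: "content f = 1"
    and prime_p: "prime p"
    and k_pos: "k > 0" and k_odd: "odd k"
    and d_pos: "d > 0"
    and a0: "coeff f 0 = p ^ k * d \<or> coeff f 0 = - (p ^ k * d)"
    and gcd01: "gcd (coeff f 0) (coeff f 1) = p ^ k"
    and ndvd: "\<not> p dvd (coeff f 2 * d)"
    and roots: "\<And>\<theta> :: complex. poly (map_poly of_int f) \<theta> = 0 \<Longrightarrow> cmod \<theta> > of_int d"
  shows "irreducible f"
proof (rule irreducibleI)
  have "\<not> p dvd d" and "\<not> p dvd coeff f 2" using ndvd by auto
  have "coeff f 0 \<noteq> 0" using a0 prime_p d_pos by auto
  moreover have "multiplicity p (p ^ k * d) = k"
    using prime_p \<open>\<not> p dvd d\<close> d_pos
    by (subst prime_elem_multiplicity_mult_distrib) (auto simp: not_dvd_imp_multiplicity_0)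
  then have mult_coeff_0: "multiplicity p (coeff f 0) = k" using a0 by auto
  ultimately show "f \<noteq> 0" and "\<not> is_unit f"
    using k_pos prime_p by (auto simp: is_unit_poly_iff multiplicity_unit_right)
  have unit_if_coprime: "is_unit u" if "u * v = f" and "\<not> p dvd coeff u 0" for u v
  proof (rule is_unit_if_degree_0_dvd_primitive[OF primitive])
    show "u dvd f" using that(1) by (metis dvd_triv_left)
    have "coeff u 0 dvd coeff f 0" using that(1) by (metis coeff_mult_0 dvd_triv_left)
    also have "coeff f 0 dvd p ^ k * d" using a0 by auto
    finally have "coeff u 0 dvd p ^ k * d" .
    moreover have "coprime (coeff u 0) (p ^ k)"
      using prime_p that(2) by (simp add: prime_imp_coprime coprime_commute)
    ultimately have "coeff u 0 dvd d" by (simp add: coprime_dvd_mult_right_iff)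
    then show "degree u = 0"
      by (rule degree_eq_0_if_coeff_0_dvd[OF \<open>u dvd f\<close> d_pos _ roots])
  qed
  fix g h assume "f = g * h"
  have "p ^ k dvd coeff (g * h) 1" using gcd01 \<open>f = g * h\<close> by (metis gcd_dvd2)
  then have "\<not> p dvd coeff g 0 \<or> \<not> p dvd coeff h 0"
    using prime_p k_odd \<open>coeff f 0 \<noteq> 0\<close> mult_coeff_0 \<open>\<not> p dvd coeff f 2\<close> \<open>f = g * h\<close>
    by (intro prime_not_dvd_coeff_0_of_factor) simp_all
  then show "is_unit g \<or> is_unit h"
    using unit_if_coprime[of g h] unit_if_coprime[of h g] \<open>f = g * h\<close>
    by (auto simp: mult.commute)
qed

end
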